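(* Let $\nu\in\mathbb M$ and $\theta_k=\theta_k[\nu]$. Then for all $k\ge0$, $$\mathbb S^{2^k}\theta_k=\theta_k,\qquad \theta_k=\tfrac12\bigl(\theta_{k+1}+\mathbb S^{2^k}\theta_{k+1}\bigr),$$ and the sequence $(\theta_k[\nu])_{k\ge0}$ uniquely determines the whole family $\mathcal P_{r,k}[\nu]$ and the measure $\nu$. Conversely, if a sequence $(\theta_k)_{k\ge0}$ of Borel probability measures on $I^{\mathbb Z}$ satisfies these two relations for all $k\ge0$, then there is a unique $\nu\in\mathbb M$ with $\theta_k[\nu]=\theta_k$ for all $k\ge0$.
   Context: $I=\{0,1\}$. $\mathbb S$ is the left shift on $I^{\mathbb Z}$, $(\mathbb Sw)(j)=w(j+1)$; for a measure $\eta$, $\mathbb S^j\eta$ denotes the pushforward $\eta\circ\mathbb S^{-j}$. $I^{\mathbb N}$ is the space of $0$–$1$ sequences $(\alpha_i)_{i\ge1}$ with uniform Bernoulli measure $m$, and $\mathbb O$ is the odometer: if $\alpha_1=\dots=\alpha_{n-1}=1$, $\alpha_n=0$ then $\mathbb O[\alpha]_i=0$ ($i<n$), $\mathbb O[\alpha]_n=1$, $\mathbb O[\alpha]_i=\alpha_i$ ($i>n$). $\mathbb M$ is the set of Borel probability measures on $I^{\mathbb Z}\times I^{\mathbb N}$ invariant under $\mathbb S\times\mathbb O$. For $k\ge0$, $0\le r\le 2^k-1$, $A_{r,k}=\{\alpha:\sum_{i=1}^k\alpha_i2^{i-1}=r\}$; $\mathcal P_{r,k}[\nu]$ is the normalized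 projection to $I^{\mathbb Z}$ of the restriction of $\nu$ to $I^{\mathbb Z}\times A_{r,k}$, and $\theta_k[\nu]=\mathcal P_{0,k}[\nu]$ (so $\theta_0[\nu]$ is the projection of $\nu$ to $I^{\mathbb Z}$). *)

theory Defs
  imports "HOL-Probability.Probability"
begin

text \<open>The space I^Z of 0-1 sequences indexed by the integers, with its
  Borel (= product) sigma algebra.\<close>
definition MZ :: "(int \<Rightarrow> bool) measure" where
  "MZ = PiM UNIV (\<lambda>_. count_space UNIV)"

text \<open>The space I^N; sequences are indexed from 0 here
  (the paper's alpha_i corresponds to a (i - 1)).\<close>
definition MN :: "(nat \<Rightarrow> bool) measure" where
  "MN = PiM UNIV (\<lambda>_. count_space UNIV)"

definition shift :: "(int \<Rightarrow> bool) \<Rightarrow> (int \<Rightarrow> bool)" where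
  "shift w = (\<lambda>j. w (j + 1))"

definition shift_pow :: "nat \<Rightarrow> (int \<Rightarrow> bool) measure \<Rightarrow> (int \<Rightarrow> bool) measure" where
  "shift_pow j \<eta> = distr \<eta> MZ (shift ^^ j)"

text \<open>Odometer (adding 1 with carry). The all-ones sequence is sent to the
  all-zeros sequence (continuous extension; a null set for m).\<close>
definition odometer :: "(nat \<Rightarrow> bool) \<Rightarrow> (nat \<Rightarrow> bool)" where
  "odometer a =
     (if \<exists>n. \<not> a n then
        (let n = (LEAST n. \<not> a n) in (\<lambda>i. if i < n then False else if i = n then True else a i))
      else (\<lambda>_. False))"

definition Minv :: "((int \<Rightarrow> bool) \<times> (nat \<Rightarrow> bool)) measure set" where
  "Minv = {\<nu>. prob_space \<nu> \<and> sets \<nu> = sets (MZ \<Otimes>\<^sub>M MN) \<and>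
              distr \<nu> (MZ \<Otimes>\<^sub>M MN) (\<lambda>(w, a). (shift w, odometer a)) = \<nu>}"

text \<open>Cylinder A_{r,k}: sum_{i<k} a_i 2^i = r (0-based indexing).\<close>
definition Acyl :: "nat \<Rightarrow> nat \<Rightarrow> (nat \<Rightarrow> bool) set" where
  "Acyl r k = {a. (\<Sum>i<k. (if a i then 2 ^ i else 0)) = r}"

definition Pproj :: "nat \<Rightarrow> nat \<Rightarrow> ((int \<Rightarrow> bool) \<times> (nat \<Rightarrow> bool)) measure
                     \<Rightarrow> (int \<Rightarrow> bool) measure" where
  "Pproj r k \<nu> =
     scale_measure (1 / emeasure \<nu> (space MZ \<times> Acyl r k))
       (distr (density \<nu> (indicator (UNIV \<times> Acyl r k))) MZ fst)"

definition theta :: "nat \<Rightarrow> ((int \<Rightarrow> bool) \<times> (nat \<Rightarrow> bool)) measure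
                     \<Rightarrow> (int \<Rightarrow> bool) measure" where
  "theta k \<nu> = Pproj 0 k \<nu>"

end

(*
  For nu in M, the odometer raises the residue of alpha mod 2^k by one while S shifts w, so
  invariance gives nu(C x A_{r+1,k}) = nu(S^-1 C x A_{r,k}). Hence all 2^k cylinders have mass
  2^-k and nu(C x A_{r,k}) = 2^-k theta_k(S^-r C). The wrap-around from r = 2^k - 1 to 0 makes
  theta_k S^(2^k)-invariant, the splitting A_{0,k} = A_{0,k+1} u A_{2^k,k+1} gives the averaging
  relation, and since the rectangles C x A_{r,k} form an intersection-stable generator, the
  theta_k determine nu.

  Conversely, the law of (S^r w, binary digits of r) with r uniform below 2^k and w ~ theta_k
  is, by the averaging relation, the image of the corresponding law at level k + 1 under
  forgetting the digit k. These laws therefore form a projective family whose limit is a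
  measure nu; it satisfies the rectangle formula above, which makes it invariant (periodicity
  of theta_k handles the wrap-around) and gives theta_k[nu] = theta_k.
*)
theory Submission
  imports Defs
begin

lemma power2_ennreal_neq [simp]: "(2::ennreal) ^ k \<noteq> 0" "(2::ennreal) ^ k \<noteq> \<top>"
  by (simp_all add: power_eq_top_ennreal)

lemma ennreal_mult_divide_cancel_left [simp]: "(c::ennreal) \<noteq> 0 \<Longrightarrow> c \<noteq> \<top> \<Longrightarrow> c * x / c = x"
  using mult_divide_eq_ennreal[of c x] by (simp add: mult.commute)

lemma ennreal_mult_divide_mult_cancel_left:
  "(c::ennreal) \<noteq> 0 \<Longrightarrow> c \<noteq> \<top> \<Longrightarrow> c * x / (c * y) = x / y"
  by (metis divide_mult_eq infinity_ennreal_def mult.commute)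

lemma nn_integral_uniform_count_measure:
  assumes "finite A" and "A \<noteq> {}"
  shows "(\<integral>\<^sup>+x. f x \<partial>uniform_count_measure A) = (\<Sum>x\<in>A. f x) / card A"
proof -
  have "ennreal (1 / real (card A)) = inverse (of_nat (card A))"
    using assms by (simp add: inverse_ennreal inverse_eq_divide ennreal_of_nat_eq_real_of_nat card_gt_0_iff)
  then show ?thesis
    using assms(1)
    by (simp add: uniform_count_measure_def nn_integral_point_measure_finite divide_ennreal_def
        mult.commute sum_distrib_right)
qed

lemma sum_lessThan_double:
  fixes f :: "nat \<Rightarrow> 'a::comm_monoid_add"
  shows "(\<Sum>r<2 * n. f r) = (\<Sum>s<n. f s + f (s + n))"
proof -
  have "r \<in> {..<n} \<union> (\<lambda>s. s + n) ` {..<n}" if "r < 2 * n" for r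
  proof (cases "r < n")
    case False
    then have "r = (r - n) + n" and "r - n < n"
      using that by auto
    then show ?thesis
      by blast
  qed simp
  then have "{..<2 * n} = {..<n} \<union> (\<lambda>s. s + n) ` {..<n}"
    by auto
  then have "(\<Sum>r<2 * n. f r) = sum f {..<n} + sum f ((\<lambda>s. s + n) ` {..<n})"
    by (simp, intro sum.union_disjoint) auto
  also have "sum f ((\<lambda>s. s + n) ` {..<n}) = (\<Sum>s<n. f (s + n))"
    by (simp add: sum.reindex)
  finally show ?thesis
    by (simp add: sum.distrib)
qed

abbreviation "MP \<equiv> MZ \<Otimes>\<^sub>M MN"

lemma space_MZ [simp]: "space MZ = UNIV"
  by (simp add: MZ_def space_PiM)

lemma space_MN [simp]: "space MN = UNIV"
  by (simp add: MN_def space_PiM)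

lemma space_MP: "space MP = UNIV"
  by (simp add: space_pair_measure)

definition residue :: "nat \<Rightarrow> (nat \<Rightarrow> bool) \<Rightarrow> nat" where
  "residue k a = (\<Sum>i<k. if a i then 2 ^ i else 0)"

lemma Acyl_eq: "Acyl r k = {a. residue k a = r}"
  by (simp add: Acyl_def residue_def)

lemma residue_0 [simp]: "residue 0 a = 0"
  by (simp add: residue_def)

lemma residue_Suc: "residue (Suc k) a = residue k a + (if a k then 2 ^ k else 0)"
  by (simp add: residue_def)

lemma residue_less: "residue k a < 2 ^ k"
  by (induction k) (auto simp: residue_Suc)

lemma residue_cong: "(\<And>i. i < k \<Longrightarrow> a i = b i) \<Longrightarrow> residue k a = residue k b"
  by (simp add: residue_def)

lemma residue_mod: "k \<le> k' \<Longrightarrow> residue k a = residue k' a mod 2 ^ k"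
proof (induction k' rule: dec_induct)
  case base
  show ?case using residue_less[of k a] by simp
next
  case (step k')
  have "2 ^ k dvd (2::nat) ^ k'"
    using step(1) by (simp add: le_imp_power_dvd)
  then show ?case
    using step by (auto simp: residue_Suc mod_add_right_eq[symmetric])
qed

lemma residue_bit: "residue k (bit r) = r mod 2 ^ k"
proof (induction k)
  case (Suc k)
  have "r mod 2 ^ Suc k = 2 ^ k * (r div 2 ^ k mod 2) + r mod 2 ^ k"
    by (metis mod_mult2_eq power_Suc2)
  then show ?case
    using Suc by (auto simp: residue_Suc bit_nat_def odd_iff_mod_2_eq_one even_iff_mod_2_eq_zero)
qed simp

lemma odometer_eq: "odometer a = (\<lambda>i. if \<forall>j<i. a j then \<not> a i else a i)"
proof (cases "\<exists>n. \<not> a n")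
  case True
  define n where "n = (LEAST n. \<not> a n)"
  have "\<not> a n"
    unfolding n_def using LeastI_ex[OF True] by simp
  moreover have "j < n \<Longrightarrow> a j" for j
    unfolding n_def using not_less_Least by blast
  ultimately show ?thesis
    unfolding odometer_def using True
    by (auto simp: Let_def fun_eq_iff simp flip: n_def) (meson linorder_neqE_nat)+
qed (auto simp: odometer_def fun_eq_iff)

text \<open>The carry leaves the first k digits exactly when they are all ones.\<close>
lemma residue_odometer_carry:
  "residue k (odometer a) + (if \<forall>j<k. a j then 2 ^ k else 0) = residue k a + 1"
proof (induction k)
  case (Suc k)
  have "odometer a k = (if \<forall>j<k. a j then \<not> a k else a k)"
    by (simp add: odometer_eq)
  moreover have "(\<forall>j<Suc k. a j) \<longleftrightarrow> (\<forall>j<k. a j) \<and> a k"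
    using less_Suc_eq by auto
  ultimately show ?case
    using Suc by (auto simp: residue_Suc split: if_splits)
qed simp

lemma residue_odometer: "residue k (odometer a) = (residue k a + 1) mod 2 ^ k"
proof (cases "\<forall>j<k. a j")
  case True
  then have "residue k (odometer a) + 2 ^ k = residue k a + 1"
    using residue_odometer_carry[of k a] by simp
  moreover have "residue k a + 1 \<le> 2 ^ k"
    using residue_less[of k a] by simp
  ultimately have "residue k (odometer a) = 0" and "residue k a + 1 = 2 ^ k"
    by linarith+
  then show ?thesis
    by simp
next
  case False
  then have "residue k (odometer a) = residue k a + 1"
    using residue_odometer_carry[of k a] by (simp only: if_False)
  then show ?thesis
    using residue_less[of k "odometer a"] by simp
qed

lemma vimage_odometer_Acyl:
  assumes "s < 2 ^ k"
  shows "odometer -` Acyl ((s + 1) mod 2 ^ k) k = Acyl s k"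
proof -
  have "(residue k a + 1) mod 2 ^ k = (s + 1) mod 2 ^ k \<longleftrightarrow> residue k a = s" for a
    using residue_less[of k a] assms by (auto simp: mod_Suc split: if_splits)
  then show ?thesis
    by (auto simp: Acyl_eq residue_odometer)
qed

lemma Acyl_empty: "2 ^ k \<le> r \<Longrightarrow> Acyl r k = {}"
  using residue_less by (auto simp: Acyl_eq) (metis leD)

lemma Acyl_0_0 [simp]: "Acyl 0 0 = UNIV"
  by (simp add: Acyl_eq)

lemma disjoint_family_Acyl: "disjoint_family (\<lambda>r. Acyl r k)"
  by (auto simp: disjoint_family_on_def Acyl_eq)

lemma Acyl_0_Suc_split:
  "Acyl 0 k = Acyl 0 (Suc k) \<union> Acyl (2 ^ k) (Suc k)"
  "Acyl 0 (Suc k) \<inter> Acyl (2 ^ k) (Suc k) = {}"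
  using residue_less[of k] by (auto simp: Acyl_eq residue_Suc) (metis less_irrefl)

lemma Acyl_Int_Acyl: "\<exists>r'' k''. Acyl r k \<inter> Acyl r' k' = Acyl r'' k''"
proof -
  have "\<exists>r'' k''. Acyl r k \<inter> Acyl r' k' = Acyl r'' k''" if "k \<le> k'" for r k r' k'
  proof (cases "r' mod 2 ^ k = r")
    case True
    then have "Acyl r k \<inter> Acyl r' k' = Acyl r' k'"
      using residue_mod[OF that] by (auto simp: Acyl_eq)
    then show ?thesis by blast
  next
    case False
    then have "Acyl r k \<inter> Acyl r' k' = Acyl (2 ^ k') k'"
      using residue_mod[OF that] Acyl_empty[of k' "2 ^ k'"] by (auto simp: Acyl_eq)
    then show ?thesis by blast
  qed
  then show ?thesis
    by (metis Int_commute nle_le)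
qed

lemma coordinate_set_eq_UN_Acyl:
  "{a. a i \<in> A} = (\<Union>r\<in>{r. r < 2 ^ Suc i \<and> (2 ^ i \<le> r) \<in> A}. Acyl r (Suc i))"
proof -
  have "a i = (2 ^ i \<le> residue (Suc i) a)" for a
    using residue_less[of i a] by (auto simp: residue_Suc)
  then show ?thesis
    using residue_less[of "Suc i"] by (auto simp: Acyl_eq)
qed

lemma measurable_shift [measurable]: "shift \<in> MZ \<rightarrow>\<^sub>M MZ"
proof -
  have "(\<lambda>w j. w (j + 1)) \<in> MZ \<rightarrow>\<^sub>M MZ"
    unfolding MZ_def by (rule measurable_PiM_single') (auto simp: space_PiM)
  then show ?thesis
    by (simp add: shift_def[abs_def])
qed

lemma measurable_funpow_shift [measurable]: "shift ^^ n \<in> MZ \<rightarrow>\<^sub>M MZ"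
  by (induction n) auto

lemma sets_vimage_shift [simp]: "C \<in> sets MZ \<Longrightarrow> shift -` C \<in> sets MZ"
  using measurable_sets[OF measurable_shift] by simp

lemma sets_vimage_funpow_shift [simp]: "C \<in> sets MZ \<Longrightarrow> (shift ^^ n) -` C \<in> sets MZ"
  using measurable_sets[OF measurable_funpow_shift] by simp

lemma measurable_residue [measurable]: "residue k \<in> MN \<rightarrow>\<^sub>M count_space UNIV"
proof (induction k)
  case (Suc k)
  have "(\<lambda>a. a k) \<in> MN \<rightarrow>\<^sub>M count_space UNIV"
    unfolding MN_def by measurable
  with Suc show ?case
    unfolding residue_Suc[abs_def] by measurable
qed simp

lemma sets_Acyl [measurable]: "Acyl r k \<in> sets MN"
proof -
  have "Acyl r k = residue k -` {r} \<inter> space MN"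
    by (auto simp: Acyl_eq)
  then show ?thesis
    using measurable_sets[OF measurable_residue, of "{r}" k] by simp
qed

lemma measurable_odometer [measurable]: "odometer \<in> MN \<rightarrow>\<^sub>M MN"
proof -
  have "(\<lambda>a i. if \<forall>j<i. a j then \<not> a i else a i) \<in> MN \<rightarrow>\<^sub>M MN"
    unfolding MN_def by (rule measurable_PiM_single') (auto simp: space_PiM)
  then show ?thesis
    by (simp add: odometer_eq[abs_def])
qed

lemma sets_UNIV [measurable]: "UNIV \<in> sets MZ" "UNIV \<in> sets MN" "UNIV \<in> sets MP"
  using sets.top[of MZ] sets.top[of MN] sets.top[of MP] by (simp_all add: space_MP)

lemma measurable_shift_odometer [measurable]: "map_prod shift odometer \<in> MP \<rightarrow>\<^sub>M MP"
  by (simp add: map_prod_def)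

lemma sets_shift_pow [simp]: "sets (shift_pow n \<eta>) = sets MZ"
  by (simp add: shift_pow_def)

lemma emeasure_shift_pow:
  assumes "sets \<eta> = sets MZ" and "C \<in> sets MZ"
  shows "emeasure (shift_pow n \<eta>) C = emeasure \<eta> ((shift ^^ n) -` C)"
proof -
  have "shift ^^ n \<in> \<eta> \<rightarrow>\<^sub>M MZ"
    using assms(1) by (simp cong: measurable_cong_sets)
  moreover have "space \<eta> = UNIV"
    using sets_eq_imp_space_eq[OF assms(1)] by simp
  ultimately show ?thesis
    unfolding shift_pow_def using assms(2) by (simp add: emeasure_distr)
qed

lemma shift_pow_0: "sets \<eta> = sets MZ \<Longrightarrow> shift_pow 0 \<eta> = \<eta>"
  by (simp add: shift_pow_def id_def distr_id2)

lemma emeasure_shift_pow_vimage_shift: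
  assumes "sets \<eta> = sets MZ" and "C \<in> sets MZ"
  shows "emeasure (shift_pow n \<eta>) (shift -` C) = emeasure (shift_pow (Suc n) \<eta>) C"
  using assms by (simp add: emeasure_shift_pow vimage_comp)

definition marginal_on ::
  "((int \<Rightarrow> bool) \<times> (nat \<Rightarrow> bool)) measure \<Rightarrow> (nat \<Rightarrow> bool) set \<Rightarrow> (int \<Rightarrow> bool) measure" where
  "marginal_on \<nu> A = distr (density \<nu> (indicator (UNIV \<times> A))) MZ fst"

lemma sets_marginal_on [simp]: "sets (marginal_on \<nu> A) = sets MZ"
  by (simp add: marginal_on_def)

lemma space_marginal_on [simp]: "space (marginal_on \<nu> A) = UNIV"
  by (simp add: marginal_on_def)

lemma emeasure_marginal_on:
  assumes \<nu>: "sets \<nu> = sets MP" and "A \<in> sets MN" and "C \<in> sets MZ"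
  shows "emeasure (marginal_on \<nu> A) C = emeasure \<nu> (C \<times> A)"
proof -
  have space: "space \<nu> = UNIV"
    using sets_eq_imp_space_eq[OF \<nu>] by (simp add: space_MP)
  have "fst \<in> density \<nu> (indicator (UNIV \<times> A)) \<rightarrow>\<^sub>M MZ"
    using \<nu> by (simp cong: measurable_cong_sets)
  then have "emeasure (marginal_on \<nu> A) C = emeasure (density \<nu> (indicator (UNIV \<times> A))) (fst -` C)"
    unfolding marginal_on_def using assms(3) space by (simp add: emeasure_distr)
  also have "\<dots> = emeasure \<nu> ((UNIV \<times> A) \<inter> fst -` C)"
    using assms space by (subst emeasure_restricted) (auto simp: vimage_fst)
  also have "(UNIV \<times> A) \<inter> fst -` C = C \<times> A"
    by auto
  finally show ?thesis .
qed

lemma sets_Pproj [simp]: "sets (Pproj r k \<nu>) = sets MZ"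
  by (simp add: Pproj_def)

lemma sets_theta [simp]: "sets (theta k \<nu>) = sets MZ"
  by (simp add: theta_def)

lemma emeasure_Pproj_eq:
  assumes \<nu>: "sets \<nu> = sets MP" and c: "c \<noteq> 0" "c \<noteq> \<top>"
    and total: "c * emeasure \<nu> (UNIV \<times> Acyl r k) = 1" and C: "C \<in> sets MZ"
  shows "emeasure (Pproj r k \<nu>) C = c * emeasure \<nu> (C \<times> Acyl r k)"
proof -
  have "emeasure (Pproj r k \<nu>) C = emeasure \<nu> (C \<times> Acyl r k) / emeasure \<nu> (UNIV \<times> Acyl r k)"
    using emeasure_marginal_on[OF \<nu> sets_Acyl C]
    by (simp add: Pproj_def marginal_on_def[symmetric] ennreal_divide_times)
  also have "\<dots> = (c * emeasure \<nu> (C \<times> Acyl r k)) / (c * emeasure \<nu> (UNIV \<times> Acyl r k))"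
    using c by (simp add: ennreal_mult_divide_mult_cancel_left)
  finally show ?thesis
    by (simp add: total divide_ennreal_def)
qed

lemma Minv_iff:
  "\<nu> \<in> Minv \<longleftrightarrow> prob_space \<nu> \<and> sets \<nu> = sets MP \<and> distr \<nu> MP (map_prod shift odometer) = \<nu>"
  by (simp add: Minv_def map_prod_def)

lemma emeasure_distr_shift_odometer:
  assumes \<nu>: "sets \<nu> = sets MP" and s: "s < 2 ^ k" and C: "C \<in> sets MZ"
  shows "emeasure (distr \<nu> MP (map_prod shift odometer)) (C \<times> Acyl ((s + 1) mod 2 ^ k) k)
    = emeasure \<nu> (shift -` C \<times> Acyl s k)"
proof -
  have "map_prod shift odometer \<in> \<nu> \<rightarrow>\<^sub>M MP"
    using \<nu> by (simp cong: measurable_cong_sets)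
  moreover have "space \<nu> = UNIV"
    using sets_eq_imp_space_eq[OF \<nu>] by (simp add: space_MP)
  ultimately show ?thesis
    using C vimage_odometer_Acyl[OF s] by (simp add: emeasure_distr map_prod_vimage)
qed

context
  fixes \<nu> assumes \<nu>: "\<nu> \<in> Minv"
begin

lemma sets_Minv: "sets \<nu> = sets MP"
  using \<nu> by (simp add: Minv_iff)

lemma space_Minv: "space \<nu> = UNIV"
  using sets_eq_imp_space_eq[OF sets_Minv] by (simp add: space_MP)

lemma Minv_rectangle_shift:
  assumes "s < 2 ^ k" and "C \<in> sets MZ"
  shows "emeasure \<nu> (C \<times> Acyl ((s + 1) mod 2 ^ k) k) = emeasure \<nu> (shift -` C \<times> Acyl s k)"
  using emeasure_distr_shift_odometer[OF sets_Minv assms] \<nu> by (simp add: Minv_iff)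

lemma Minv_rectangle_funpow_shift:
  "r < 2 ^ k \<Longrightarrow> C \<in> sets MZ \<Longrightarrow>
    emeasure \<nu> (C \<times> Acyl r k) = emeasure \<nu> ((shift ^^ r) -` C \<times> Acyl 0 k)"
proof (induction r arbitrary: C)
  case (Suc r)
  have "emeasure \<nu> (C \<times> Acyl (Suc r) k) = emeasure \<nu> (shift -` C \<times> Acyl r k)"
    using Minv_rectangle_shift[of r k C] Suc.prems by simp
  also have "\<dots> = emeasure \<nu> ((shift ^^ Suc r) -` C \<times> Acyl 0 k)"
    using Suc by (simp add: vimage_comp)
  finally show ?case .
qed simp

lemma Minv_rectangle_period:
  assumes C: "C \<in> sets MZ"
  shows "emeasure \<nu> (C \<times> Acyl 0 k) = emeasure \<nu> ((shift ^^ 2 ^ k) -` C \<times> Acyl 0 k)"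
proof -
  have "emeasure \<nu> (C \<times> Acyl 0 k) = emeasure \<nu> (shift -` C \<times> Acyl (2 ^ k - 1) k)"
    using Minv_rectangle_shift[of "2 ^ k - 1" k C] C by simp
  also have "\<dots> = emeasure \<nu> ((shift ^^ (2 ^ k - 1)) -` (shift -` C) \<times> Acyl 0 k)"
    using C by (intro Minv_rectangle_funpow_shift) simp_all
  also have "(shift ^^ (2 ^ k - 1)) -` (shift -` C) = (shift ^^ Suc (2 ^ k - 1)) -` C"
    by (simp only: vimage_comp funpow.simps(2))
  finally show ?thesis
    by simp
qed

lemma Minv_cylinder_measure: "2 ^ k * emeasure \<nu> (UNIV \<times> Acyl 0 k) = 1"
proof -
  interpret prob_space \<nu>
    using \<nu> by (simp add: Minv_iff)
  have "(\<Sum>r<(2::nat) ^ k. emeasure \<nu> (UNIV \<times> Acyl 0 k)) = (\<Sum>r<2 ^ k. emeasure \<nu> (UNIV \<times> Acyl r k))"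
  proof (rule sum.cong)
    fix r assume "r \<in> {..<(2::nat) ^ k}"
    then show "emeasure \<nu> (UNIV \<times> Acyl 0 k) = emeasure \<nu> (UNIV \<times> Acyl r k)"
      using Minv_rectangle_funpow_shift[of r k UNIV] by simp
  qed simp
  also have "\<dots> = emeasure \<nu> (\<Union>r<2 ^ k. UNIV \<times> Acyl r k)"
  proof (rule sum_emeasure)
    show "disjoint_family_on (\<lambda>r. UNIV \<times> Acyl r k) {..<2 ^ k}"
      using disjoint_family_Acyl[of k] by (auto simp: disjoint_family_on_def)
  qed (auto simp: sets_Minv)
  also have "(\<Union>r<2 ^ k. UNIV \<times> Acyl r k) = space \<nu>"
    using residue_less space_Minv by (auto simp: Acyl_eq)
  finally show ?thesis
    by (simp add: emeasure_space_1)
qed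

lemma emeasure_theta_Minv:
  assumes "C \<in> sets MZ"
  shows "emeasure (theta k \<nu>) C = 2 ^ k * emeasure \<nu> (C \<times> Acyl 0 k)"
  unfolding theta_def by (rule emeasure_Pproj_eq[OF sets_Minv _ _ Minv_cylinder_measure assms]) simp_all

lemma Minv_rectangle_theta:
  assumes "r < 2 ^ k" and "C \<in> sets MZ"
  shows "2 ^ k * emeasure \<nu> (C \<times> Acyl r k) = emeasure (shift_pow r (theta k \<nu>)) C"
  using assms Minv_rectangle_funpow_shift[OF assms]
  by (simp add: emeasure_shift_pow emeasure_theta_Minv[of "(shift ^^ r) -` C"])

lemma theta_periodic: "shift_pow (2 ^ k) (theta k \<nu>) = theta k \<nu>"
proof (rule measure_eqI)
  fix C assume "C \<in> sets (shift_pow (2 ^ k) (theta k \<nu>))"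
  then have C: "C \<in> sets MZ"
    by simp
  have "emeasure (shift_pow (2 ^ k) (theta k \<nu>)) C = 2 ^ k * emeasure \<nu> ((shift ^^ 2 ^ k) -` C \<times> Acyl 0 k)"
    using C by (simp add: emeasure_shift_pow emeasure_theta_Minv)
  also have "\<dots> = emeasure (theta k \<nu>) C"
    using C by (simp add: emeasure_theta_Minv Minv_rectangle_period[symmetric])
  finally show "emeasure (shift_pow (2 ^ k) (theta k \<nu>)) C = emeasure (theta k \<nu>) C" .
qed simp

lemma theta_average:
  assumes B: "B \<in> sets MZ"
  shows "emeasure (theta k \<nu>) B =
    (emeasure (theta (Suc k) \<nu>) B + emeasure (shift_pow (2 ^ k) (theta (Suc k) \<nu>)) B) / 2"
proof -
  have split: "emeasure \<nu> (B \<times> Acyl 0 (Suc k)) + emeasure \<nu> (B \<times> Acyl (2 ^ k) (Suc k))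
      = emeasure \<nu> (B \<times> Acyl 0 k)"
    using B Acyl_0_Suc_split[of k] by (subst plus_emeasure) (auto simp: sets_Minv Sigma_Un_distrib2)
  have "emeasure (theta (Suc k) \<nu>) B + emeasure (shift_pow (2 ^ k) (theta (Suc k) \<nu>)) B
      = 2 ^ Suc k * emeasure \<nu> (B \<times> Acyl 0 (Suc k)) + 2 ^ Suc k * emeasure \<nu> (B \<times> Acyl (2 ^ k) (Suc k))"
    using B Minv_rectangle_theta[of "2 ^ k" "Suc k" B] by (simp add: emeasure_theta_Minv)
  also have "\<dots> = 2 * emeasure (theta k \<nu>) B"
    using B by (simp add: split emeasure_theta_Minv mult.assoc flip: distrib_left)
  finally have "emeasure (theta (Suc k) \<nu>) B + emeasure (shift_pow (2 ^ k) (theta (Suc k) \<nu>)) B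
      = 2 * emeasure (theta k \<nu>) B" .
  then show ?thesis
    by simp
qed

end

lemma sets_MN_Acyl: "sets MN = sigma_sets UNIV {Acyl r k | r k. True}"
proof
  have "sets MN = sigma_sets UNIV {{a. a i \<in> A} | i A. True}"
    unfolding MN_def sets_PiM_single by (simp add: space_PiM)
  also have "\<dots> \<subseteq> sigma_sets UNIV {Acyl r k | r k. True}"
  proof (rule sigma_sets_mono)
    show "{{a. a i \<in> A} | i A. True} \<subseteq> sigma_sets UNIV {Acyl r k | r k. True}"
    proof clarify
      fix i and A :: "bool set"
      show "{a. a i \<in> A} \<in> sigma_sets UNIV {Acyl r k | r k. True}"
        unfolding coordinate_set_eq_UN_Acyl
        by (rule sigma_sets_UNION) (auto intro: sigma_sets.Basic)
    qed
  qed
  finally show "sets MN \<subseteq> sigma_sets UNIV {Acyl r k | r k. True}" .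
  have "{Acyl r k | r k. True} \<subseteq> sets MN"
    by auto
  then show "sigma_sets UNIV {Acyl r k | r k. True} \<subseteq> sets MN"
    using sets.sigma_sets_subset[of _ MN] by simp
qed

lemma sets_MP_rectangles: "sets MP = sigma_sets UNIV {C \<times> Acyl r k | C r k. C \<in> sets MZ}"
proof -
  have "sets MP = sets (sigma (space MZ \<times> space MN) {C \<times> A | C A. C \<in> sets MZ \<and> A \<in> {Acyl r k | r k. True}})"
    by (rule sets_pair_eq[where Ca = "{UNIV}" and Cb = "{Acyl 0 0}"])
      (auto simp: sets_MN_Acyl sets.sigma_sets_eq[of MZ, simplified]
        dest: sets.sets_into_space, metis Acyl_0_0)
  also have "{C \<times> A | C A. C \<in> sets MZ \<and> A \<in> {Acyl r k | r k. True}} = {C \<times> Acyl r k | C r k. C \<in> sets MZ}"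
    by blast
  finally show ?thesis
    by simp
qed

lemma Int_stable_rectangles: "Int_stable {C \<times> Acyl r k | C r k. C \<in> sets MZ}"
proof (rule Int_stableI)
  fix X Y assume "X \<in> {C \<times> Acyl r k | C r k. C \<in> sets MZ}" "Y \<in> {C \<times> Acyl r k | C r k. C \<in> sets MZ}"
  then obtain C r k C' r' k' where "X = C \<times> Acyl r k" "Y = C' \<times> Acyl r' k'" "C \<in> sets MZ" "C' \<in> sets MZ"
    by blast
  moreover obtain r'' k'' where "Acyl r k \<inter> Acyl r' k' = Acyl r'' k''"
    using Acyl_Int_Acyl by blast
  ultimately have "X \<inter> Y = (C \<inter> C') \<times> Acyl r'' k''" and "C \<inter> C' \<in> sets MZ"
    by auto
  then show "X \<inter> Y \<in> {C \<times> Acyl r k | C r k. C \<in> sets MZ}"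
    by blast
qed

lemma measure_eq_on_rectangles:
  assumes sets: "sets \<nu> = sets MP" "sets \<nu>' = sets MP" and finite: "emeasure \<nu> UNIV \<noteq> \<infinity>"
    and eq: "\<And>C r k. C \<in> sets MZ \<Longrightarrow> r < 2 ^ k \<Longrightarrow> emeasure \<nu> (C \<times> Acyl r k) = emeasure \<nu>' (C \<times> Acyl r k)"
  shows "\<nu> = \<nu>'"
proof (rule measure_eqI_generator_eq[OF Int_stable_rectangles, where \<Omega> = UNIV and A = "\<lambda>_. UNIV"])
  fix X assume "X \<in> {C \<times> Acyl r k | C r k. C \<in> sets MZ}"
  then obtain C r k where "X = C \<times> Acyl r k" "C \<in> sets MZ"
    by blast
  then show "emeasure \<nu> X = emeasure \<nu>' X"
    using eq[of C r k] Acyl_empty[of k r] by (cases "r < 2 ^ k") auto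
next
  show "range (\<lambda>_. UNIV) \<subseteq> {C \<times> Acyl r k | C r k. C \<in> sets MZ}"
    by (auto intro!: exI[of _ UNIV] exI[of _ "0::nat"])
qed (use sets finite in \<open>auto simp: sets_MP_rectangles\<close>)

lemma Minv_eqI:
  assumes \<nu>: "\<nu> \<in> Minv" and \<nu>': "\<nu>' \<in> Minv" and theta: "\<And>k. theta k \<nu> = theta k \<nu>'"
  shows "\<nu> = \<nu>'"
proof (rule measure_eq_on_rectangles[OF sets_Minv[OF \<nu>] sets_Minv[OF \<nu>']])
  show "emeasure \<nu> UNIV \<noteq> \<infinity>"
    using \<nu> prob_space.emeasure_space_1 space_Minv[OF \<nu>] by (fastforce simp: Minv_iff)
  fix C and r k :: nat
  assume "C \<in> sets MZ" "r < 2 ^ k"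
  then have "2 ^ k * emeasure \<nu> (C \<times> Acyl r k) = 2 ^ k * emeasure \<nu>' (C \<times> Acyl r k)"
    by (simp add: Minv_rectangle_theta[OF \<nu>] Minv_rectangle_theta[OF \<nu>'] theta)
  then show "emeasure \<nu> (C \<times> Acyl r k) = emeasure \<nu>' (C \<times> Acyl r k)"
    by (simp add: ennreal_mult_cancel_left)
qed

definition truncate :: "nat \<Rightarrow> (nat \<Rightarrow> bool) \<Rightarrow> nat \<Rightarrow> bool" where
  "truncate k a i \<longleftrightarrow> i < k \<and> a i"

lemma truncate_bit: "truncate k (bit r) = bit (r mod 2 ^ k :: nat)"
  by (auto simp: fun_eq_iff truncate_def take_bit_eq_mod[symmetric] bit_take_bit_iff)

lemma truncate_truncate: "k \<le> k' \<Longrightarrow> truncate k (truncate k' a) = truncate k a"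
  by (auto simp: fun_eq_iff truncate_def)

lemma measurable_truncate [measurable]: "truncate k \<in> MN \<rightarrow>\<^sub>M MN"
proof -
  have "(\<lambda>a i. i < k \<and> a i) \<in> MN \<rightarrow>\<^sub>M MN"
    unfolding MN_def by (rule measurable_PiM_single') (auto simp: space_PiM)
  then show ?thesis
    by (simp add: truncate_def[abs_def])
qed

lemma measurable_map_prod_truncate [measurable]: "map_prod id (truncate k) \<in> MP \<rightarrow>\<^sub>M MP"
  by (simp add: map_prod_def)

text \<open>The projective limit theorem needs a product of Polish spaces, so points of
  I^Z x I^N are coded as families of discrete booleans indexed by Z + N.\<close>
definition coords :: "(int \<Rightarrow> bool) \<times> (nat \<Rightarrow> bool) \<Rightarrow> int + nat \<Rightarrow> bool discrete" where
  "coords p = case_sum (\<lambda>j. discrete (fst p j)) (\<lambda>i. discrete (snd p i))"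

definition of_coords :: "(int + nat \<Rightarrow> bool discrete) \<Rightarrow> (int \<Rightarrow> bool) \<times> (nat \<Rightarrow> bool)" where
  "of_coords f = (\<lambda>j. of_discrete (f (Inl j)), \<lambda>i. of_discrete (f (Inr i)))"

lemma of_coords_coords [simp]: "of_coords (coords p) = p"
  by (simp add: of_coords_def coords_def discrete_inverse)

lemma measurable_of_discrete [measurable]: "of_discrete \<in> (borel :: bool discrete measure) \<rightarrow>\<^sub>M count_space UNIV"
proof -
  have sets: "sets (borel :: bool discrete measure) = sets (count_space UNIV)"
    by (simp add: sets_borel_eq_count_space)
  show ?thesis
    unfolding measurable_cong_sets[OF sets refl] by simp
qed

lemma measurable_restrict_coords [measurable]:
  "(\<lambda>p. restrict (coords p) J) \<in> MP \<rightarrow>\<^sub>M PiM J (\<lambda>_. borel)"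
proof -
  have "(\<lambda>p. coords p x) \<in> MP \<rightarrow>\<^sub>M borel" for x
    unfolding coords_def MZ_def MN_def by (cases x) simp_all
  then show ?thesis
    by (rule measurable_restrict)
qed

lemma measurable_of_coords_comp:
  assumes "\<And>x. (\<lambda>f. of_discrete (g f x)) \<in> M \<rightarrow>\<^sub>M count_space UNIV"
  shows "(\<lambda>f. of_coords (g f)) \<in> M \<rightarrow>\<^sub>M MP"
proof -
  have "(\<lambda>f j. of_discrete (g f (Inl j))) \<in> M \<rightarrow>\<^sub>M MZ"
    unfolding MZ_def by (rule measurable_PiM_single') (auto simp: space_PiM assms)
  moreover have "(\<lambda>f i. of_discrete (g f (Inr i))) \<in> M \<rightarrow>\<^sub>M MN"
    unfolding MN_def by (rule measurable_PiM_single') (auto simp: space_PiM assms)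
  ultimately show ?thesis
    unfolding of_coords_def by measurable
qed

definition depth :: "(int + nat) set \<Rightarrow> nat" where
  "depth J = Max (insert 0 (Suc ` (Inr -` J)))"

lemma finite_vimage_Inr [simp]: "finite J \<Longrightarrow> finite (Inr -` J)"
  by (rule finite_vimageI) auto

lemma depth_greater: "finite J \<Longrightarrow> Inr i \<in> J \<Longrightarrow> i < depth J"
  unfolding depth_def by (rule Suc_le_lessD, rule Max_ge) auto

lemma depth_le: "finite J \<Longrightarrow> (\<And>i. Inr i \<in> J \<Longrightarrow> i < k) \<Longrightarrow> depth J \<le> k"
  unfolding depth_def by (subst Max_le_iff) (auto simp: Suc_le_eq)

lemma restrict_coords_truncate:
  "finite J \<Longrightarrow> restrict (coords (map_prod id (truncate (depth J)) p)) J = restrict (coords p) J"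
  by (auto simp: fun_eq_iff coords_def truncate_def depth_greater split: sum.splits)

locale consistent_thetas =
  fixes \<theta>s :: "nat \<Rightarrow> (int \<Rightarrow> bool) measure"
  assumes prob_space_thetas: "prob_space (\<theta>s k)"
    and sets_thetas [simp]: "sets (\<theta>s k) = sets MZ"
    and thetas_periodic: "shift_pow (2 ^ k) (\<theta>s k) = \<theta>s k"
    and thetas_average: "B \<in> sets MZ \<Longrightarrow> emeasure (\<theta>s k) B =
      (emeasure (\<theta>s (Suc k)) B + emeasure (shift_pow (2 ^ k) (\<theta>s (Suc k))) B) / 2"
begin

lemma space_thetas [simp]: "space (\<theta>s k) = UNIV"
  using sets_eq_imp_space_eq[OF sets_thetas] by simp

text \<open>The level-k picture of the measure to be constructed: its image under forgetting the
  odometer digits from k on.\<close>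
definition joint :: "nat \<Rightarrow> ((int \<Rightarrow> bool) \<times> (nat \<Rightarrow> bool)) measure" where
  "joint k = uniform_count_measure {..<2 ^ k :: nat} \<bind> (\<lambda>r. distr (\<theta>s k) MP (\<lambda>w. ((shift ^^ r) w, bit r)))"

lemma uniform_count_measure_in_prob_algebra:
  "uniform_count_measure {..<2 ^ k :: nat} \<in> space (prob_algebra (uniform_count_measure {..<2 ^ k :: nat}))"
  by (simp add: space_prob_algebra prob_space_uniform_count_measure lessThan_empty_iff)

lemma measurable_shifted_digits: "(\<lambda>w. ((shift ^^ r) w, bit r)) \<in> \<theta>s k \<rightarrow>\<^sub>M MP"
  by (simp cong: measurable_cong_sets)

lemma measurable_joint_kernel:
  "(\<lambda>r. distr (\<theta>s k) MP (\<lambda>w. ((shift ^^ r) w, bit r)))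
    \<in> uniform_count_measure {..<2 ^ k :: nat} \<rightarrow>\<^sub>M prob_algebra MP"
  unfolding measurable_cong_sets[OF sets_uniform_count_measure_count_space refl]
  by (simp add: space_prob_algebra prob_space.prob_space_distr[OF prob_space_thetas]
      measurable_shifted_digits)

lemma sets_joint [simp]: "sets (joint k) = sets MP"
  unfolding joint_def by (rule sets_bind'[OF uniform_count_measure_in_prob_algebra measurable_joint_kernel])

lemma prob_space_joint: "prob_space (joint k)"
  unfolding joint_def by (rule prob_space_bind'[OF uniform_count_measure_in_prob_algebra measurable_joint_kernel])

lemma emeasure_joint:
  assumes "X \<in> sets MP"
  shows "emeasure (joint k) X = (\<Sum>r<2 ^ k. emeasure (\<theta>s k) ((\<lambda>w. ((shift ^^ r) w, bit r)) -` X)) / 2 ^ k"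
proof -
  have "emeasure (joint k) X = (\<integral>\<^sup>+r. emeasure (distr (\<theta>s k) MP (\<lambda>w. ((shift ^^ r) w, bit r))) X
      \<partial>uniform_count_measure {..<2 ^ k :: nat})"
    unfolding joint_def
    by (rule emeasure_bind_prob_algebra[OF uniform_count_measure_in_prob_algebra measurable_joint_kernel assms])
  also have "\<dots> = (\<integral>\<^sup>+r. emeasure (\<theta>s k) ((\<lambda>w. ((shift ^^ r) w, bit r)) -` X)
      \<partial>uniform_count_measure {..<2 ^ k :: nat})"
    using assms by (intro nn_integral_cong) (simp add: emeasure_distr[OF measurable_shifted_digits])
  also have "\<dots> = (\<Sum>r<2 ^ k. emeasure (\<theta>s k) ((\<lambda>w. ((shift ^^ r) w, bit r)) -` X)) / 2 ^ k"
    by (simp add: nn_integral_uniform_count_measure lessThan_empty_iff)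
  finally show ?thesis .
qed

lemma joint_rectangle:
  assumes r: "r < 2 ^ k" and C: "C \<in> sets MZ"
  shows "2 ^ k * emeasure (joint k) (C \<times> Acyl r k) = emeasure (shift_pow r (\<theta>s k)) C"
proof -
  have "(\<lambda>w. ((shift ^^ r') w, bit r')) -` (C \<times> Acyl r k) = (if r' = r then (shift ^^ r) -` C else {})"
    if "r' < 2 ^ k" for r'
    using that r by (auto simp: Acyl_eq residue_bit)
  then have "(\<Sum>r'<2 ^ k. emeasure (\<theta>s k) ((\<lambda>w. ((shift ^^ r') w, bit r')) -` (C \<times> Acyl r k)))
      = (\<Sum>r'<2 ^ k. if r' = r then emeasure (\<theta>s k) ((shift ^^ r) -` C) else 0)"
    by (intro sum.cong) simp_all
  also have "\<dots> = emeasure (\<theta>s k) ((shift ^^ r) -` C)"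
    using r by simp
  finally have sum: "(\<Sum>r'<2 ^ k. emeasure (\<theta>s k) ((\<lambda>w. ((shift ^^ r') w, bit r')) -` (C \<times> Acyl r k)))
      = emeasure (\<theta>s k) ((shift ^^ r) -` C)" .
  show ?thesis
    using C by (simp add: emeasure_joint sum emeasure_shift_pow ennreal_times_divide)
qed

lemma space_joint [simp]: "space (joint k) = UNIV"
  using sets_eq_imp_space_eq[OF sets_joint] by (simp add: space_MP)

lemma thetas_average_double:
  assumes "B \<in> sets MZ"
  shows "emeasure (\<theta>s (Suc k)) B + emeasure (shift_pow (2 ^ k) (\<theta>s (Suc k))) B = 2 * emeasure (\<theta>s k) B"
proof -
  have "2 * emeasure (\<theta>s k) B
      = 2 * ((emeasure (\<theta>s (Suc k)) B + emeasure (shift_pow (2 ^ k) (\<theta>s (Suc k))) B) / 2)"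
    by (subst thetas_average[OF assms, of k]) (rule refl)
  also have "\<dots> = emeasure (\<theta>s (Suc k)) B + emeasure (shift_pow (2 ^ k) (\<theta>s (Suc k))) B"
    unfolding ennreal_times_divide by (rule ennreal_mult_divide_cancel_left) simp_all
  finally show ?thesis ..
qed

lemma measurable_joint_truncate: "map_prod id (truncate k) \<in> joint k' \<rightarrow>\<^sub>M MP"
  by (simp cong: measurable_cong_sets)

lemma measurable_joint_restrict_coords:
  "(\<lambda>p. restrict (coords p) J) \<in> joint k \<rightarrow>\<^sub>M PiM J (\<lambda>_. borel)"
  by (simp cong: measurable_cong_sets)

lemma distr_joint_Suc_truncate: "distr (joint (Suc k)) MP (map_prod id (truncate k)) = joint k"
proof (rule measure_eqI)
  fix X assume "X \<in> sets (distr (joint (Suc k)) MP (map_prod id (truncate k)))"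
  then have X: "X \<in> sets MP"
    by simp
  define B where "B s = (\<lambda>w. ((shift ^^ s) w, bit s)) -` X" for s
  have B: "B s \<in> sets MZ" for s
    using measurable_sets[OF _ X, of "\<lambda>w. ((shift ^^ s) w, bit s)" MZ] by (simp add: B_def)
  have low: "(\<lambda>w. ((shift ^^ s) w, bit s)) -` (map_prod id (truncate k) -` X) = B s"
    and high: "(\<lambda>w. ((shift ^^ (s + 2 ^ k)) w, bit (s + 2 ^ k))) -` (map_prod id (truncate k) -` X)
      = (shift ^^ 2 ^ k) -` B s" if "s < 2 ^ k" for s
    using that by (auto simp: B_def truncate_bit funpow_add)
  have tX: "map_prod id (truncate k) -` X \<in> sets MP"
    using measurable_sets[OF _ X, of "map_prod id (truncate k)" MP] by (simp add: space_MP map_prod_def)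
  have "emeasure (distr (joint (Suc k)) MP (map_prod id (truncate k))) X
      = emeasure (joint (Suc k)) (map_prod id (truncate k) -` X)"
    using emeasure_distr[OF measurable_joint_truncate X] by simp
  also have "\<dots> = (\<Sum>r<2 * 2 ^ k. emeasure (\<theta>s (Suc k))
      ((\<lambda>w. ((shift ^^ r) w, bit r)) -` (map_prod id (truncate k) -` X))) / (2 * 2 ^ k)"
    using emeasure_joint[OF tX] by simp
  also have "(\<Sum>r<2 * 2 ^ k. emeasure (\<theta>s (Suc k))
      ((\<lambda>w. ((shift ^^ r) w, bit r)) -` (map_prod id (truncate k) -` X)))
    = (\<Sum>s<2 ^ k. emeasure (\<theta>s (Suc k)) (B s) + emeasure (shift_pow (2 ^ k) (\<theta>s (Suc k))) (B s))"
    unfolding sum_lessThan_double using B by (intro sum.cong) (simp_all add: low high emeasure_shift_pow)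
  also have "\<dots> = 2 * (\<Sum>s<2 ^ k. emeasure (\<theta>s k) (B s))"
    using B by (simp add: thetas_average_double sum_distrib_left)
  also have "2 * (\<Sum>s<2 ^ k. emeasure (\<theta>s k) (B s)) / (2 * 2 ^ k) = (\<Sum>s<2 ^ k. emeasure (\<theta>s k) (B s)) / 2 ^ k"
    by (rule ennreal_mult_divide_mult_cancel_left) simp_all
  also have "\<dots> = emeasure (joint k) X"
    using X by (simp add: emeasure_joint B_def)
  finally show "emeasure (distr (joint (Suc k)) MP (map_prod id (truncate k))) X = emeasure (joint k) X" .
qed simp

lemma distr_joint_truncate:
  "d \<le> k \<Longrightarrow> distr (joint k) MP (map_prod id (truncate d)) = distr (joint d) MP (map_prod id (truncate d))"
proof (induction k rule: dec_induct)
  case (step k)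
  have comp: "map_prod id (truncate d) \<circ> map_prod id (truncate k) = map_prod id (truncate d)"
    using step(1) by (auto simp: fun_eq_iff truncate_truncate)
  have "distr (joint (Suc k)) MP (map_prod id (truncate d))
      = distr (joint (Suc k)) MP (map_prod id (truncate d) \<circ> map_prod id (truncate k))"
    by (simp only: comp)
  also have "\<dots> = distr (distr (joint (Suc k)) MP (map_prod id (truncate k))) MP (map_prod id (truncate d))"
    by (rule distr_distr[symmetric, OF measurable_map_prod_truncate measurable_joint_truncate])
  also have "\<dots> = distr (joint k) MP (map_prod id (truncate d))"
    by (simp only: distr_joint_Suc_truncate)
  also have "\<dots> = distr (joint d) MP (map_prod id (truncate d))"
    by (rule step(3))
  finally show ?case .
qed simp

definition fin_marginal :: "(int + nat) set \<Rightarrow> (int + nat \<Rightarrow> bool discrete) measure" where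
  "fin_marginal J = distr (joint (depth J)) (PiM J (\<lambda>_. borel)) (\<lambda>p. restrict (coords p) J)"

lemma fin_marginal_eq:
  assumes "finite J" and "depth J \<le> k"
  shows "fin_marginal J = distr (joint k) (PiM J (\<lambda>_. borel)) (\<lambda>p. restrict (coords p) J)"
proof -
  let ?T = "map_prod id (truncate (depth J))"
  have coords: "(\<lambda>p. restrict (coords p) J) \<circ> ?T = (\<lambda>p. restrict (coords p) J)"
    using assms(1) by (simp add: fun_eq_iff restrict_coords_truncate)
  have "distr (joint k) (PiM J (\<lambda>_. borel)) (\<lambda>p. restrict (coords p) J)
      = distr (joint k) (PiM J (\<lambda>_. borel)) ((\<lambda>p. restrict (coords p) J) \<circ> ?T)"
    by (simp only: coords)
  also have "\<dots> = distr (distr (joint k) MP ?T) (PiM J (\<lambda>_. borel)) (\<lambda>p. restrict (coords p) J)"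
    by (rule distr_distr[symmetric, OF measurable_restrict_coords measurable_joint_truncate])
  also have "\<dots> = distr (distr (joint (depth J)) MP ?T) (PiM J (\<lambda>_. borel)) (\<lambda>p. restrict (coords p) J)"
    by (simp only: distr_joint_truncate[OF assms(2)])
  also have "\<dots> = distr (joint (depth J)) (PiM J (\<lambda>_. borel)) ((\<lambda>p. restrict (coords p) J) \<circ> ?T)"
    by (rule distr_distr[OF measurable_restrict_coords measurable_joint_truncate])
  also have "\<dots> = fin_marginal J"
    by (simp only: coords fin_marginal_def)
  finally show ?thesis ..
qed

lemma prob_space_fin_marginal: "prob_space (fin_marginal J)"
  unfolding fin_marginal_def
  by (rule prob_space.prob_space_distr[OF prob_space_joint measurable_joint_restrict_coords])

lemma polish_projective_fin_marginal: "polish_projective UNIV fin_marginal"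
  unfolding polish_projective_def
proof (rule projective_family.intro)
  fix J H :: "(int + nat) set" assume JH: "J \<subseteq> H" and H: "finite H"
  then have J: "finite J"
    by (rule finite_subset)
  have "depth J \<le> depth H"
    using JH H J by (auto intro!: depth_le depth_greater)
  then have "fin_marginal J = distr (joint (depth H)) (PiM J (\<lambda>_. borel)) (\<lambda>p. restrict (coords p) J)"
    by (rule fin_marginal_eq[OF J])
  also have "\<dots> = distr (joint (depth H)) (PiM J (\<lambda>_. borel))
      ((\<lambda>f. restrict f J) \<circ> (\<lambda>p. restrict (coords p) H))"
    using JH by (simp add: comp_def Int_absorb1 restrict_restrict)
  also have "\<dots> = distr (fin_marginal H) (PiM J (\<lambda>_. borel)) (\<lambda>f. restrict f J)"
    unfolding fin_marginal_def
    by (rule distr_distr[symmetric, OF measurable_restrict_subset[OF JH] measurable_joint_restrict_coords])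
  finally show "fin_marginal J = distr (fin_marginal H) (PiM J (\<lambda>_. borel)) (\<lambda>f. restrict f J)" .
qed (rule prob_space_fin_marginal)

sublocale PF: polish_projective UNIV fin_marginal
  by (rule polish_projective_fin_marginal)

definition lift :: "((int \<Rightarrow> bool) \<times> (nat \<Rightarrow> bool)) measure" where
  "lift = distr PF.lim MP of_coords"

lemma measurable_lim_of_coords: "of_coords \<in> PF.lim \<rightarrow>\<^sub>M MP"
proof -
  have "(\<lambda>f. of_coords (id f)) \<in> PiM UNIV (\<lambda>_. borel :: bool discrete measure) \<rightarrow>\<^sub>M MP"
    by (rule measurable_of_coords_comp) simp
  then show ?thesis
    by (simp cong: measurable_cong_sets)
qed

lemma sets_lift [simp]: "sets lift = sets MP"
  by (simp add: lift_def)

lemma space_lift [simp]: "space lift = UNIV"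
  using sets_eq_imp_space_eq[OF sets_lift] by (simp add: space_MP)

lemma prob_space_lift: "prob_space lift"
  unfolding lift_def by (rule PF.P.prob_space_distr[OF measurable_lim_of_coords])

lemma lift_cylinder:
  fixes F :: "int set" and X :: "int \<Rightarrow> bool set" and r k :: nat
  assumes F: "finite F"
  defines "E \<equiv> prod_emb UNIV (\<lambda>_. count_space UNIV) F (PiE F X) \<times> Acyl r k"
  shows "emeasure lift E = emeasure (joint k) E"
proof -
  \<comment> \<open>E only sees the coordinates in J, so its preimage under of_coords is a cylinder over J\<close>
  define J where "J = Inl ` F \<union> Inr ` {..<k}"
  have J: "finite J"
    using F by (simp add: J_def)
  have depth: "depth J \<le> k"
    using J by (rule depth_le) (auto simp: J_def)
  define pad where "pad y = (\<lambda>x. if x \<in> J then y x else discrete False)" for y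
  have E_iff: "p \<in> E \<longleftrightarrow> (\<forall>j\<in>F. fst p j \<in> X j) \<and> residue k (snd p) = r" for p
    by (cases p) (auto simp: E_def prod_emb_iff PiE_iff space_PiM Acyl_eq)
  have pad: "of_coords (pad (restrict f J)) \<in> E \<longleftrightarrow> of_coords f \<in> E" for f
  proof -
    have "residue k (snd (of_coords (pad (restrict f J)))) = residue k (snd (of_coords f))"
      by (rule residue_cong) (simp add: of_coords_def pad_def J_def)
    then show ?thesis
      unfolding E_iff by (simp add: of_coords_def pad_def J_def)
  qed
  have E: "E \<in> sets MP"
    using F by (simp add: E_def MZ_def sets_PiM_I)
  define Y where "Y = (\<lambda>y. of_coords (pad y)) -` E \<inter> space (PiM J (\<lambda>_. borel))"
  have "(\<lambda>y. of_coords (pad y)) \<in> PiM J (\<lambda>_. borel) \<rightarrow>\<^sub>M MP"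
    by (rule measurable_of_coords_comp) (simp add: pad_def)
  then have Y: "Y \<in> sets (PiM J (\<lambda>_. borel))"
    unfolding Y_def using E by (rule measurable_sets)
  have "emeasure lift E = emeasure PF.lim (of_coords -` E \<inter> space PF.lim)"
    unfolding lift_def by (rule emeasure_distr[OF measurable_lim_of_coords E])
  also have "of_coords -` E \<inter> space PF.lim = prod_emb UNIV (\<lambda>_. borel) J Y"
    using pad by (auto simp: Y_def prod_emb_iff space_PiM)
  also have "emeasure PF.lim (prod_emb UNIV (\<lambda>_. borel) J Y) = emeasure (fin_marginal J) Y"
    using J Y by (simp add: PF.emeasure_lim_emb)
  also have "\<dots> = emeasure (joint k) ((\<lambda>p. restrict (coords p) J) -` Y)"
    using Y by (simp add: fin_marginal_eq[OF J depth] emeasure_distr[OF measurable_joint_restrict_coords])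
  also have "(\<lambda>p. restrict (coords p) J) -` Y = E"
    by (simp add: Y_def space_PiM pad set_eq_iff)
  finally show ?thesis .
qed

lemma lift_rectangle:
  assumes r: "r < 2 ^ k" and C: "C \<in> sets MZ"
  shows "2 ^ k * emeasure lift (C \<times> Acyl r k) = emeasure (shift_pow r (\<theta>s k)) C"
proof -
  have "marginal_on lift (Acyl r k) = marginal_on (joint k) (Acyl r k)"
  proof (rule measure_eqI_PiM_infinite)
    show "sets (marginal_on lift (Acyl r k)) = sets (PiM UNIV (\<lambda>_::int. count_space UNIV))"
      and "sets (marginal_on (joint k) (Acyl r k)) = sets (PiM UNIV (\<lambda>_::int. count_space UNIV))"
      by (simp_all add: MZ_def)
    show "finite_measure (marginal_on lift (Acyl r k))"
      using prob_space.emeasure_le_1[OF prob_space_lift, of "UNIV \<times> Acyl r k"]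
      by (intro finite_measureI) (auto simp: emeasure_marginal_on top_unique)
    fix F :: "int set" and X :: "int \<Rightarrow> bool set" assume F: "finite F" and "\<And>i. i \<in> F \<Longrightarrow> X i \<in> sets (count_space UNIV)"
    have "prod_emb UNIV (\<lambda>_. count_space UNIV) F (PiE F X) \<in> sets MZ"
      using F by (simp add: MZ_def sets_PiM_I)
    then show "emeasure (marginal_on lift (Acyl r k)) (prod_emb UNIV (\<lambda>_. count_space UNIV) F (PiE F X))
        = emeasure (marginal_on (joint k) (Acyl r k)) (prod_emb UNIV (\<lambda>_. count_space UNIV) F (PiE F X))"
      using lift_cylinder[OF F] by (simp add: emeasure_marginal_on)
  qed
  then have "emeasure lift (C \<times> Acyl r k) = emeasure (joint k) (C \<times> Acyl r k)"
    using C emeasure_marginal_on[of lift "Acyl r k" C] emeasure_marginal_on[of "joint k" "Acyl r k" C] by simp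
  then show ?thesis
    using joint_rectangle[OF r C] by simp
qed

lemma lift_in_Minv: "lift \<in> Minv"
proof -
  let ?SO = "distr lift MP (map_prod shift odometer)"
  have step: "2 ^ k * emeasure ?SO (C \<times> Acyl ((s + 1) mod 2 ^ k) k) = emeasure (shift_pow (Suc s) (\<theta>s k)) C"
    if "s < 2 ^ k" "C \<in> sets MZ" for s k C
    using that emeasure_distr_shift_odometer[OF sets_lift that]
    by (simp add: lift_rectangle emeasure_shift_pow_vimage_shift)
  have "?SO = lift"
  proof (rule measure_eq_on_rectangles)
    have "map_prod shift odometer \<in> lift \<rightarrow>\<^sub>M MP"
      by (simp cong: measurable_cong_sets)
    then show "emeasure ?SO UNIV \<noteq> \<infinity>"
      using prob_space.emeasure_le_1[OF prob_space_lift, of UNIV]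
      by (auto simp: emeasure_distr[OF _ sets_UNIV(3)] top_unique)
    fix C and r k :: nat assume C: "C \<in> sets MZ" and r: "r < 2 ^ k"
    have "2 ^ k * emeasure ?SO (C \<times> Acyl r k) = 2 ^ k * emeasure lift (C \<times> Acyl r k)"
    proof (cases r)
      case 0
      \<comment> \<open>the odometer wraps around, and periodicity of theta_k closes the gap\<close>
      have "shift_pow (Suc (2 ^ k - 1)) (\<theta>s k) = shift_pow 0 (\<theta>s k)"
        by (simp add: thetas_periodic shift_pow_0)
      then show ?thesis
        using step[of "2 ^ k - 1" k C] C 0 by (simp add: lift_rectangle)
    next
      case (Suc s)
      then show ?thesis
        using step[of s k C] C r by (simp add: lift_rectangle)
    qed
    then show "emeasure ?SO (C \<times> Acyl r k) = emeasure lift (C \<times> Acyl r k)"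
      by (simp add: ennreal_mult_cancel_left)
  qed simp_all
  then show ?thesis
    by (simp add: Minv_iff prob_space_lift)
qed

lemma theta_lift: "theta k lift = \<theta>s k"
proof (rule measure_eqI)
  have total: "2 ^ k * emeasure lift (UNIV \<times> Acyl 0 k) = 1"
    using lift_rectangle[of 0 k UNIV] prob_space.emeasure_space_1[OF prob_space_thetas]
    by (simp add: shift_pow_0)
  fix C assume "C \<in> sets (theta k lift)"
  then have C: "C \<in> sets MZ"
    by simp
  have "emeasure (theta k lift) C = 2 ^ k * emeasure lift (C \<times> Acyl 0 k)"
    unfolding theta_def by (rule emeasure_Pproj_eq[OF sets_lift _ _ total C]) simp_all
  also have "\<dots> = emeasure (\<theta>s k) C"
    using lift_rectangle[of 0 k C] C by (simp add: shift_pow_0)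
  finally show "emeasure (theta k lift) C = emeasure (\<theta>s k) C" .
qed simp

lemma ex1_Minv_theta: "\<exists>!\<nu>. \<nu> \<in> Minv \<and> (\<forall>k. theta k \<nu> = \<theta>s k)"
proof (rule ex1I[of _ lift])
  fix \<nu> assume "\<nu> \<in> Minv \<and> (\<forall>k. theta k \<nu> = \<theta>s k)"
  then show "\<nu> = lift"
    using Minv_eqI[OF _ lift_in_Minv] theta_lift by auto
qed (simp add: lift_in_Minv theta_lift)

end

theorem corollary1:
  shows
   "(\<forall>\<nu>\<in>Minv. \<forall>k.
        shift_pow (2 ^ k) (theta k \<nu>) = theta k \<nu> \<and>
        (\<forall>B\<in>sets MZ. emeasure (theta k \<nu>) B =
            (emeasure (theta (Suc k) \<nu>) B
             + emeasure (shift_pow (2 ^ k) (theta (Suc k) \<nu>)) B) / 2))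
    \<and> (\<forall>\<nu>\<in>Minv. \<forall>\<nu>'\<in>Minv. (\<forall>k. theta k \<nu> = theta k \<nu>') \<longrightarrow>
          (\<forall>r k. Pproj r k \<nu> = Pproj r k \<nu>') \<and> \<nu> = \<nu>')
    \<and> (\<forall>\<theta>s :: nat \<Rightarrow> (int \<Rightarrow> bool) measure.
          (\<forall>k. prob_space (\<theta>s k) \<and> sets (\<theta>s k) = sets MZ) \<longrightarrow>
          (\<forall>k. shift_pow (2 ^ k) (\<theta>s k) = \<theta>s k \<and>
               (\<forall>B\<in>sets MZ. emeasure (\<theta>s k) B =
                  (emeasure (\<theta>s (Suc k)) B
                   + emeasure (shift_pow (2 ^ k) (\<theta>s (Suc k))) B) / 2)) \<longrightarrow>
          (\<exists>!\<nu>. \<nu> \<in> Minv \<and> (\<forall>k. theta k \<nu> = \<theta>s k)))"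
  (is "?periodic_average \<and> ?uniqueness \<and> ?existence")
proof -
  have ?periodic_average
    using theta_periodic theta_average by blast
  moreover have ?uniqueness
    using Minv_eqI by blast
  moreover have ?existence
  proof (intro allI impI)
    fix \<theta>s :: "nat \<Rightarrow> (int \<Rightarrow> bool) measure"
    assume "\<forall>k. prob_space (\<theta>s k) \<and> sets (\<theta>s k) = sets MZ"
      and "\<forall>k. shift_pow (2 ^ k) (\<theta>s k) = \<theta>s k \<and>
        (\<forall>B\<in>sets MZ. emeasure (\<theta>s k) B =
          (emeasure (\<theta>s (Suc k)) B + emeasure (shift_pow (2 ^ k) (\<theta>s (Suc k))) B) / 2)"
    then have "consistent_thetas \<theta>s"
      by (intro consistent_thetas.intro) blast+
    then show "\<exists>!\<nu>. \<nu> \<in> Minv \<and> (\<forall>k. theta k \<nu> = \<theta>s k)"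
      by (rule consistent_thetas.ex1_Minv_theta)
  qed
  ultimately show ?thesis
    by blast
qed

end
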